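(* Let $\mathcal{G}$ be a $k$-uniform hypergraph with $n$ vertices. Then for every $j\in V(\mathcal{G})$, \[ \alpha_j(\mathcal{G})\leq\frac{(k-1)d_j}{n-1}. \]
   Context: A $k$-uniform hypergraph $\mathcal{G}$ has vertex set $V(\mathcal{G})=[n]$ and edge set $E(\mathcal{G})$ of $k$-element subsets of $V(\mathcal{G})$; $d_j$ is the number of edges containing vertex $j$. For $\mathbf{x}\in\mathbb{R}^n$, $\mathcal{L}_\mathcal{G}\mathbf{x}^k=\sum_{\{i_1,\ldots,i_k\}\in E(\mathcal{G})}\left(x_{i_1}^k+\cdots+x_{i_k}^k-k\,x_{i_1}\cdots x_{i_k}\right)$; the inverse Perron value of vertex $j$ is $\alpha_j(\mathcal{G})=\min\{\mathcal{L}_\mathcal{G}\mathbf{x}^k : \mathbf{x}\in\mathbb{R}^n_+,\ \sum_{i=1}^n x_i^k=1,\ x_j=0\}$. *)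

theory Defs
  imports Complex_Main
begin

definition uniform_hypergraph :: "nat \<Rightarrow> nat \<Rightarrow> nat set set \<Rightarrow> bool" where
  "uniform_hypergraph n k E \<longleftrightarrow> (\<forall>e\<in>E. e \<subseteq> {1..n} \<and> card e = k)"

definition hdegree :: "nat set set \<Rightarrow> nat \<Rightarrow> nat" where
  "hdegree E j = card {e\<in>E. j \<in> e}"

definition lap_form :: "nat \<Rightarrow> nat set set \<Rightarrow> (nat \<Rightarrow> real) \<Rightarrow> real" where
  "lap_form k E x = (\<Sum>e\<in>E. (\<Sum>i\<in>e. x i ^ k) - real k * (\<Prod>i\<in>e. x i))"

text \<open>Inverse Perron value alpha_j: minimum of L_G x^k over nonnegative x in R^n
  with sum x_i^k = 1 and x_j = 0 (written as an infimum, which is attained).\<close>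
definition inv_perron :: "nat \<Rightarrow> nat \<Rightarrow> nat set set \<Rightarrow> nat \<Rightarrow> real" where
  "inv_perron n k E j = Inf {lap_form k E x | x.
      (\<forall>i\<in>{1..n}. x i \<ge> 0) \<and> (\<forall>i. i \<notin> {1..n} \<longrightarrow> x i = 0) \<and>
      (\<Sum>i=1..n. x i ^ k) = 1 \<and> x j = 0}"

end

theory Submission
  imports Defs
begin

text \<open>Evaluate the Laplacian form at the vector that is constant on the vertices other than j,
  normalised so that its k-th powers sum to 1. On an edge avoiding j all entries are equal, so the
  edge contributes nothing; on an edge through j the product vanishes and the edge contributes
  (k - 1)/(n - 1). Summing over the d_j edges through j gives the bound.\<close>

lemma finite_uniform_hypergraph:
  assumes "uniform_hypergraph n k E"
  shows "finite E"
  using assms unfolding uniform_hypergraph_def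
  by (intro finite_subset[of E "Pow {1..n}"]) auto

lemma lap_form_lower_bound:
  assumes "\<And>i. 0 \<le> x i" and "\<And>i. x i \<le> 1"
  shows "- real k * real (card E) \<le> lap_form k E x"
proof -
  have "- real k \<le> (\<Sum>i\<in>e. x i ^ k) - real k * (\<Prod>i\<in>e. x i)" for e
  proof -
    have "real k * (\<Prod>i\<in>e. x i) \<le> real k"
      using prod_le_1[of e x] assms by (simp add: mult_left_le)
    moreover have "0 \<le> (\<Sum>i\<in>e. x i ^ k)"
      using assms by (simp add: sum_nonneg)
    ultimately show ?thesis by linarith
  qed
  then have "(\<Sum>e\<in>E. - real k) \<le> lap_form k E x"
    unfolding lap_form_def by (rule sum_mono)
  then show ?thesis by (simp add: mult.commute)
qed

lemma power_le_one_if_sum_powers_eq_one: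
  fixes x :: "'a \<Rightarrow> real"
  assumes "finite A" and "i \<in> A" and "\<And>i. i \<in> A \<Longrightarrow> 0 \<le> x i"
    and "(\<Sum>i\<in>A. x i ^ k) = 1" and "k > 0"
  shows "x i \<le> 1"
proof -
  have "x i ^ k \<le> 1"
    using member_le_sum[of i A "\<lambda>i. x i ^ k"] assms by simp
  then show ?thesis
    using assms(2,3,5) by (metis not_le one_less_power)
qed

lemma bdd_below_inv_perron_set:
  assumes "k > 0"
  shows "bdd_below {lap_form k E x | x.
      (\<forall>i\<in>{1..n}. x i \<ge> 0) \<and> (\<forall>i. i \<notin> {1..n} \<longrightarrow> x i = 0) \<and>
      (\<Sum>i=1..n. x i ^ k) = 1 \<and> x j = 0}"
proof (rule bdd_belowI[of _ "- real k * real (card E)"], safe)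
  fix x :: "nat \<Rightarrow> real"
  assume nonneg: "\<forall>i\<in>{1..n}. x i \<ge> 0" and outside: "\<forall>i. i \<notin> {1..n} \<longrightarrow> x i = 0"
    and norm: "(\<Sum>i=1..n. x i ^ k) = 1"
  have "0 \<le> x i \<and> x i \<le> 1" for i
    using power_le_one_if_sum_powers_eq_one[of "{1..n}" i x k] nonneg outside norm assms
    by (cases "i \<in> {1..n}") auto
  then show "- real k * real (card E) \<le> lap_form k E x"
    by (intro lap_form_lower_bound) auto
qed

lemma inv_perron_le_lap_form:
  assumes "k > 0"
    and "\<forall>i\<in>{1..n}. x i \<ge> 0" and "\<forall>i. i \<notin> {1..n} \<longrightarrow> x i = 0"
    and "(\<Sum>i=1..n. x i ^ k) = 1" and "x j = 0"
  shows "inv_perron n k E j \<le> lap_form k E x"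
  unfolding inv_perron_def
  by (rule cInf_lower[OF _ bdd_below_inv_perron_set[OF assms(1)]]) (use assms in blast)

lemma lap_form_const_off_vertex:
  assumes "uniform_hypergraph n k E" and "k > 0"
  shows "lap_form k E (\<lambda>i. if i \<in> {1..n} \<and> i \<noteq> j then c else 0)
    = real (k - 1) * c ^ k * real (hdegree E j)"
proof -
  let ?x = "\<lambda>i. if i \<in> {1..n} \<and> i \<noteq> j then c else 0"
  have edge: "(\<Sum>i\<in>e. ?x i ^ k) - real k * (\<Prod>i\<in>e. ?x i)
      = (if j \<in> e then real (k - 1) * c ^ k else 0)" if "e \<in> E" for e
  proof -
    have sub: "e \<subseteq> {1..n}" and card_e: "card e = k"
      using assms(1) that unfolding uniform_hypergraph_def by auto
    have fin: "finite e"
      using card_e assms(2) card_ge_0_finite by blast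
    show ?thesis
    proof (cases "j \<in> e")
      case True
      have "(\<Prod>i\<in>e. ?x i) = 0"
        using fin True by (intro prod_zero) auto
      moreover have "(\<Sum>i\<in>e. ?x i ^ k) = (\<Sum>i\<in>e - {j}. c ^ k)"
        using fin True assms(2) sub by (simp add: sum.remove[of e j] subset_iff)
      moreover have "card (e - {j}) = k - 1"
        using True card_e fin by simp
      ultimately show ?thesis using True by simp
    next
      case False
      then have "?x i = c" if "i \<in> e" for i
        using sub that by auto
      then show ?thesis
        using False card_e by simp
    qed
  qed
  have "lap_form k E ?x = (\<Sum>e\<in>E. if j \<in> e then real (k - 1) * c ^ k else 0)"
    unfolding lap_form_def using edge by (rule sum.cong[OF refl])
  also have "\<dots> = real (k - 1) * c ^ k * real (hdegree E j)"
    using finite_uniform_hypergraph[OF assms(1)]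
    by (simp add: sum.If_cases Int_def hdegree_def)
  finally show ?thesis .
qed

theorem theorem3p6:
  fixes n k :: nat and E :: "nat set set" and j :: nat
  assumes "k \<ge> 2" and "n \<ge> 2"
    and "uniform_hypergraph n k E"
    and "j \<in> {1..n}"
  shows "inv_perron n k E j \<le> real (k - 1) * real (hdegree E j) / real (n - 1)"
proof -
  define c where "c = root k (1 / real (n - 1))"
  define x where "x i = (if i \<in> {1..n} \<and> i \<noteq> j then c else 0)" for i
  have "k > 0" using assms(1) by simp
  have "c \<ge> 0" unfolding c_def by (simp add: real_root_ge_zero)
  have ck: "c ^ k = 1 / real (n - 1)"
    unfolding c_def using \<open>k > 0\<close> assms(2) by (simp add: real_root_pow_pos2)
  have "(\<Sum>i=1..n. x i ^ k) = x j ^ k + (\<Sum>i\<in>{1..n} - {j}. x i ^ k)"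
    using assms(4) by (intro sum.remove) auto
  also have "\<dots> = (\<Sum>i\<in>{1..n} - {j}. c ^ k)"
    using \<open>k > 0\<close> by (simp add: x_def)
  also have "\<dots> = 1"
    using assms(2,4) by (simp add: ck)
  finally have "inv_perron n k E j \<le> lap_form k E x"
    using \<open>k > 0\<close> \<open>c \<ge> 0\<close> by (intro inv_perron_le_lap_form) (auto simp: x_def)
  also have "\<dots> = real (k - 1) * real (hdegree E j) / real (n - 1)"
    unfolding x_def using lap_form_const_off_vertex[OF assms(3) \<open>k > 0\<close>] by (simp add: ck)
  finally show ?thesis .
qed

end
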